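(* For $n\ge0$ let $E_n(v,q)=\sum_{\pi\in\Pi_n}q^{\mathrm{cr}(\pi)+\mathrm{ne}(\pi)}v^{\mathrm{ed}(\pi)}$. Then $$\sum_{n\ge0}E_n(v,q)z^n=\cfrac{1}{1-z-\cfrac{vz^2}{1-(1+v)z-\cfrac{2qvz^2}{1-(2qv+1)z-\cfrac{3q^2vz^2}{1-(3q^2v+1)z-\cfrac{4q^3vz^2}{\cdots}}}}},$$ i.e. the Jacobi-type continued fraction whose $k$-th level ($k\ge0$) has denominator term $1-(1+kq^{k-1}v)z$ (the term being $1-z$ for $k=0$) and numerator $(k+1)q^kvz^2$.
   Context: $\Pi_n$ is the set of partitions of $[n]=\{1,\dots,n\}$ into disjoint nonempty blocks ($\Pi_0$ consists of the empty partition). Edges of $\pi$ are pairs $(i,j)$, $i<j$, of consecutive elements of the same block; $\mathrm{ed}(\pi)$ is the number of edges. Two edges $(i_1,j_1),(i_2,j_2)$ form a crossing if $i_1<i_2<j_1<j_2$ and a nesting if $i_1<i_2<j_2<j_1$; $\mathrm{cr}(\pi)$, $\mathrm{ne}(\pi)$ count the unordered pairs of edges forming a crossing, resp. a nesting. *)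

theory Defs
  imports "HOL-Computational_Algebra.Formal_Power_Series" "HOL-Library.Disjoint_Sets"
begin

definition set_partitions :: "nat \<Rightarrow> nat set set set" where
  "set_partitions n = {P. partition_on {1..n} P}"

definition edges :: "nat set set \<Rightarrow> (nat \<times> nat) set" where
  "edges P = {(i, j). \<exists>B\<in>P. i \<in> B \<and> j \<in> B \<and> i < j \<and> (\<forall>k\<in>B. \<not> (i < k \<and> k < j))}"

definition ed :: "nat set set \<Rightarrow> nat" where
  "ed P = card (edges P)"

text \<open>Crossings / nestings: unordered pairs of edges; each such pair is counted once
  via the ordering i1 < i2 of the left endpoints.\<close>
definition cr :: "nat set set \<Rightarrow> nat" where
  "cr P = card {((i1, j1), (i2, j2)). (i1, j1) \<in> edges P \<and> (i2, j2) \<in> edges P \<and>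
                 i1 < i2 \<and> i2 < j1 \<and> j1 < j2}"

definition ne :: "nat set set \<Rightarrow> nat" where
  "ne P = card {((i1, j1), (i2, j2)). (i1, j1) \<in> edges P \<and> (i2, j2) \<in> edges P \<and>
                 i1 < i2 \<and> i2 < j2 \<and> j2 < j1}"

definition E :: "nat \<Rightarrow> 'a::comm_ring_1 \<Rightarrow> 'a \<Rightarrow> 'a" where
  "E n v q = (\<Sum>P\<in>set_partitions n. q ^ (cr P + ne P) * v ^ (ed P))"

text \<open>Convergents of a J-fraction with level-k denominator term 1 - b k z and
  numerator c k z^2 (between levels k and k+1):
  jcf b c m k is the depth-m truncation of the tail starting at level k
  (the tail beyond depth m is replaced by 0).\<close>
fun jcf :: "(nat \<Rightarrow> 'a::field) \<Rightarrow> (nat \<Rightarrow> 'a) \<Rightarrow> nat \<Rightarrow> nat \<Rightarrow> 'a fps" where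
  "jcf b c 0 k = 0"
| "jcf b c (Suc m) k =
     inverse (1 - fps_const (b k) * fps_X - fps_const (c k) * fps_X ^ 2 * jcf b c m (Suc k))"

end

(*
  By Flajolet's combinatorial theory of continued fractions, the convergents of a J-fraction
  with level terms b k and numerators c k converge to the generating function of Motzkin paths
  in which a level step at height k weighs b k and a down step from k + 1 to k weighs c k.
  A set partition is determined by its edges, and the edge sets of the partitions of [n] are
  exactly the arc diagrams on [n] in which every point is the left end of at most one arc and
  the right end of at most one arc.  Scanning such a diagram from left to right, the number k
  of open arcs performs a Motzkin path: each point may close one of the k open arcs or not,
  and independently open a new arc or not.  A closing arc crosses or nests each of the other
  k - 1 open arcs exactly once, and every crossing or nesting arises in this way, which gives
  the weights b k = 1 + k q^(k-1) v and c k = (k + 1) q^k v.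
*)

theory Submission
  imports Defs
begin

unbundle fps_syntax

section \<open>Motzkin paths and J-fractions\<close>

text \<open>The total weight of the Motzkin paths with n steps from height k down to height 0, where
  a level step at height h weighs b h, a down step from h + 1 to h weighs c h and an up step 1.\<close>

fun motzkin_weight :: "(nat \<Rightarrow> 'a::comm_semiring_1) \<Rightarrow> (nat \<Rightarrow> 'a) \<Rightarrow> nat \<Rightarrow> nat \<Rightarrow> 'a" where
  "motzkin_weight b c 0 k = (if k = 0 then 1 else 0)"
| "motzkin_weight b c (Suc n) k = b k * motzkin_weight b c n k + motzkin_weight b c n (Suc k)
     + (if k = 0 then 0 else c (k - 1) * motzkin_weight b c n (k - 1))"

text \<open>The generating function of the same paths confined below height m, split where they first
  drop below height k: an excursion above k, counted by a convergent of the tail of the fraction,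
  a down step, and a path from k - 1.\<close>

fun strip_path_fps :: "(nat \<Rightarrow> 'a::field) \<Rightarrow> (nat \<Rightarrow> 'a) \<Rightarrow> nat \<Rightarrow> nat \<Rightarrow> 'a fps" where
  "strip_path_fps b c m 0 = jcf b c m 0"
| "strip_path_fps b c m (Suc k) =
     jcf b c (m - Suc k) (Suc k) * fps_X * fps_const (c k) * strip_path_fps b c m k"

lemma jcf_Suc_unfold:
  "jcf b c (Suc m) k = 1 + fps_X * fps_const (b k) * jcf b c (Suc m) k
     + fps_X ^ 2 * fps_const (c k) * jcf b c m (Suc k) * jcf b c (Suc m) k"
proof -
  define D where "D = 1 - fps_const (b k) * fps_X - fps_const (c k) * fps_X ^ 2 * jcf b c m (Suc k)"
  have "D $ 0 \<noteq> 0"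
    by (simp add: D_def power2_eq_square)
  then have "jcf b c (Suc m) k * D = 1"
    by (simp add: D_def inverse_mult_eq_1)
  then show ?thesis
    unfolding D_def by (simp add: algebra_simps)
qed

lemma strip_path_fps_unfold:
  assumes "k < m"
  shows "strip_path_fps b c m k =
     (if k = 0 then 1 else fps_X * fps_const (c (k - 1)) * strip_path_fps b c m (k - 1))
     + fps_X * fps_const (b k) * strip_path_fps b c m k + fps_X * strip_path_fps b c m (Suc k)"
proof -
  define L where "L = (if k = 0 then 1 else fps_X * fps_const (c (k - 1)) * strip_path_fps b c m (k - 1))"
  define m' where "m' = m - Suc k"
  have "m - k = Suc m'"
    using assms by (simp add: m'_def Suc_diff_Suc)
  then have k: "strip_path_fps b c m k = jcf b c (Suc m') k * L"
    by (cases k) (simp_all add: L_def algebra_simps)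
  then have Suc_k: "strip_path_fps b c m (Suc k) = jcf b c m' (Suc k) * fps_X * fps_const (c k) * (jcf b c (Suc m') k * L)"
    by (simp add: m'_def)
  show ?thesis
    unfolding L_def[symmetric] Suc_k k
    by (subst jcf_Suc_unfold) (simp add: algebra_simps power2_eq_square)
qed

lemma strip_path_fps_nth:
  "k + n < m \<Longrightarrow> strip_path_fps b c m k $ n = motzkin_weight b c n k"
proof (induction n arbitrary: k)
  case 0
  then show ?case
    by (subst strip_path_fps_unfold) auto
next
  case (Suc n)
  then show ?case
    using Suc.IH[of k] Suc.IH[of "Suc k"] Suc.IH[of "k - 1"]
    by (subst strip_path_fps_unfold) (auto simp: fps_X_mult_nth mult.assoc simp del: strip_path_fps.simps)
qed

lemma jcf_tendsto_motzkin_weight: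
  "(\<lambda>m. jcf b c m 0) \<longlonglongrightarrow> Abs_fps (\<lambda>n. motzkin_weight b c n 0)"
proof (rule tendsto_fpsI)
  fix n
  have "jcf b c m 0 $ n = motzkin_weight b c n 0" if "n < m" for m
    using strip_path_fps_nth[of 0 n m b c] that by simp
  then show "eventually (\<lambda>m. jcf b c m 0 $ n = Abs_fps (\<lambda>n. motzkin_weight b c n 0) $ n) sequentially"
    by (auto simp: eventually_sequentially intro!: exI[of _ "Suc n"])
qed

section \<open>Set partitions as arc diagrams\<close>

definition block_edges :: "nat set \<Rightarrow> (nat \<times> nat) set" where
  "block_edges B = {(i, j). i \<in> B \<and> j \<in> B \<and> i < j \<and> (\<forall>k\<in>B. \<not> (i < k \<and> k < j))}"

lemma edges_insert: "edges (insert B P) = block_edges B \<union> edges P"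
  unfolding edges_def block_edges_def by blast

lemma block_edges_singleton: "block_edges {m} = {}"
  unfolding block_edges_def by auto

lemma block_edges_insert_above_Max:
  assumes "i \<in> B" "\<forall>k\<in>B. k \<le> i" "i < m"
  shows "block_edges (insert m B) = insert (i, m) (block_edges B)"
  using assms unfolding block_edges_def by (auto 4 3 dest: leD)

lemma edge_lt: "(i, j) \<in> edges P \<Longrightarrow> i < j"
  unfolding edges_def by blast

lemma edge_in_block:
  "(i, j) \<in> edges P \<Longrightarrow> \<exists>B\<in>P. i \<in> B \<and> j \<in> B"
  unfolding edges_def by blast

lemma edge_from_non_maximal:
  assumes "finite B" "B \<in> P" "x \<in> B" "y \<in> B" "x < y"
  shows "\<exists>j\<in>B. x < j \<and> j \<le> y \<and> (x, j) \<in> edges P"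
proof -
  define j where "j = Min {k\<in>B. x < k}"
  have "j \<in> {k\<in>B. x < k}"
    unfolding j_def using assms by (intro Min_in) auto
  moreover have "j \<le> y"
    unfolding j_def using assms by (intro Min_le) auto
  moreover have "\<forall>k\<in>B. \<not> (x < k \<and> k < j)"
    using assms(1) Min_le[of "{k\<in>B. x < k}"] by (fastforce simp: j_def)
  ultimately show ?thesis
    using assms(2,3) unfolding edges_def by blast
qed

lemma block_unique: "disjoint P \<Longrightarrow> B \<in> P \<Longrightarrow> C \<in> P \<Longrightarrow> x \<in> B \<Longrightarrow> x \<in> C \<Longrightarrow> B = C"
  unfolding disjoint_def disjnt_def by blast

lemma trancl_edges_iff:
  assumes disj: "disjoint P" and fin: "finite (\<Union>P)"
  shows "(x, y) \<in> (edges P)\<^sup>+ \<longleftrightarrow> x < y \<and> (\<exists>B\<in>P. x \<in> B \<and> y \<in> B)"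
proof
  assume "(x, y) \<in> (edges P)\<^sup>+"
  then show "x < y \<and> (\<exists>B\<in>P. x \<in> B \<and> y \<in> B)"
  proof (induction rule: trancl_induct)
    case (base y)
    then show ?case
      using edge_lt[of x y P] edge_in_block[of x y P] by blast
  next
    case (step y z)
    then obtain B C where "B \<in> P" "x \<in> B" "y \<in> B" "C \<in> P" "y \<in> C" "z \<in> C" "x < y"
      using edge_in_block[of y z P] by blast
    then show ?case
      using edge_lt[OF step(2)] block_unique[OF disj, of B C y] by auto
  qed
next
  assume "x < y \<and> (\<exists>B\<in>P. x \<in> B \<and> y \<in> B)"
  then obtain B where B: "B \<in> P" "x \<in> B" "y \<in> B" "x < y"
    by blast
  then show "(x, y) \<in> (edges P)\<^sup>+"
  proof (induction "y - x" arbitrary: x rule: less_induct)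
    case less
    obtain j where j: "j \<in> B" "x < j" "j \<le> y" "(x, j) \<in> edges P"
      using edge_from_non_maximal[OF finite_subset[OF Union_upper[OF less.prems(1)] fin] less.prems] by blast
    show ?case
    proof (cases "j = y")
      case True
      then show ?thesis
        using j by auto
    next
      case False
      then have "(j, y) \<in> (edges P)\<^sup>+"
        using less.hyps[of j] j less.prems by auto
      then show ?thesis
        using j(4) by (meson trancl_into_trancl2)
    qed
  qed
qed

lemma same_block_eq_edges_closure:
  assumes "partition_on A P" "finite A"
  shows "{(x, y). \<exists>B\<in>P. x \<in> B \<and> y \<in> B} = Id_on A \<union> (edges P)\<^sup>+ \<union> ((edges P)\<^sup>+)\<inverse>"
proof -
  have disj: "disjoint P" and fin: "finite (\<Union>P)" and A: "A = \<Union>P"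
    using assms by (auto simp: partition_on_def)
  have "(\<exists>B\<in>P. x \<in> B \<and> y \<in> B) \<longleftrightarrow> (x = y \<and> x \<in> A) \<or> (x, y) \<in> (edges P)\<^sup>+ \<or> (y, x) \<in> (edges P)\<^sup>+"
    for x y
    unfolding trancl_edges_iff[OF disj fin] A by (cases x y rule: linorder_cases) auto
  then show ?thesis
    by (simp add: set_eq_iff Id_on_iff)
qed

lemma inj_on_edges:
  assumes "finite A"
  shows "inj_on edges {P. partition_on A P}"
proof (rule inj_onI)
  fix P Q
  assume P: "P \<in> {P. partition_on A P}" and Q: "Q \<in> {P. partition_on A P}" and eq: "edges P = edges Q"
  have "P = A // (Id_on A \<union> (edges P)\<^sup>+ \<union> ((edges P)\<^sup>+)\<inverse>)"
    using P assms by (simp add: partition_on_eq_quotient flip: same_block_eq_edges_closure)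
  also have "\<dots> = Q"
    using Q assms by (simp add: eq partition_on_eq_quotient flip: same_block_eq_edges_closure)
  finally show "P = Q" .
qed

lemma edges_left_unique:
  assumes "disjoint P" "(i, j) \<in> edges P" "(i, j') \<in> edges P"
  shows "j = j'"
proof -
  obtain B B' where "B \<in> P" "i \<in> B" "j \<in> B" "i < j" "\<forall>k\<in>B. \<not> (i < k \<and> k < j)"
    and "B' \<in> P" "i \<in> B'" "j' \<in> B'" "i < j'" "\<forall>k\<in>B'. \<not> (i < k \<and> k < j')"
    using assms(2,3) unfolding edges_def by blast
  moreover from this have "B = B'"
    using block_unique[OF assms(1)] by blast
  ultimately show ?thesis
    using linorder_neqE by blast
qed

lemma edges_right_unique:
  assumes "disjoint P" "(i, j) \<in> edges P" "(i', j) \<in> edges P"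
  shows "i = i'"
proof -
  obtain B B' where "B \<in> P" "i \<in> B" "j \<in> B" "i < j" "\<forall>k\<in>B. \<not> (i < k \<and> k < j)"
    and "B' \<in> P" "i' \<in> B'" "j \<in> B'" "i' < j" "\<forall>k\<in>B'. \<not> (i' < k \<and> k < j)"
    using assms(2,3) unfolding edges_def by blast
  moreover from this have "B = B'"
    using block_unique[OF assms(1)] by blast
  ultimately show ?thesis
    using linorder_neqE by blast
qed

text \<open>Arc diagrams on the positions t + 1, ..., t + n, where the arcs still open after position t
  start at the points of S.\<close>

definition arc_systems :: "nat set \<Rightarrow> nat \<Rightarrow> nat \<Rightarrow> (nat \<times> nat) set set" where
  "arc_systems S t n = {A. A \<subseteq> {(a, b). a < b \<and> (a \<in> S \<or> t < a) \<and> t < b \<and> b \<le> t + n}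
      \<and> S \<subseteq> fst ` A \<and> inj_on fst A \<and> inj_on snd A}"

lemma edges_in_arc_systems:
  assumes "partition_on {1..n} P"
  shows "edges P \<in> arc_systems {} 0 n"
proof -
  have "disjoint P" "\<Union>P = {1..n}"
    using assms by (auto simp: partition_on_def)
  moreover from this have "edges P \<subseteq> {(a, b). a < b \<and> 0 < a \<and> 0 < b \<and> b \<le> n}"
    unfolding edges_def by fastforce
  ultimately show ?thesis
    unfolding arc_systems_def
    by (auto intro!: inj_onI dest: edges_left_unique edges_right_unique)
qed

lemma partition_on_insert_singleton:
  "partition_on A P \<Longrightarrow> m \<notin> A \<Longrightarrow> partition_on (insert m A) (insert {m} P)"
  by (subst partition_on_insert) (auto simp: partition_on_def disjnt_def)

lemma partition_on_extend_block:
  assumes "partition_on A P" "B \<in> P" "m \<notin> A"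
  shows "partition_on (insert m A) (insert (insert m B) (P - {B}))"
proof -
  have disj: "disjnt B (\<Union>(P - {B}))"
    using assms(1,2) by (auto simp: partition_on_def disjoint_def disjnt_def)
  have "partition_on A (insert B (P - {B}))"
    using assms(1,2) by (simp add: insert_absorb)
  then have "partition_on (A - B) (P - {B})" "B \<subseteq> A"
    using partition_on_insert[OF disj] by auto
  moreover have "insert m A - insert m B = A - B"
    using assms(3) by auto
  ultimately show ?thesis
    using assms(3) disj
    by (subst partition_on_insert) (auto simp: disjnt_def partition_on_def)
qed

lemma edges_extend_block:
  assumes "B \<in> P" "i \<in> B" "\<forall>k\<in>B. k \<le> i" "i < m"
  shows "edges (insert (insert m B) (P - {B})) = insert (i, m) (edges P)"
proof -
  have "edges P = block_edges B \<union> edges (P - {B})"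
    using edges_insert[of B "P - {B}"] assms(1) by (simp add: insert_absorb)
  then show ?thesis
    using block_edges_insert_above_Max[OF assms(2-4)] by (simp add: edges_insert)
qed

lemma extend_partition_by_arc:
  assumes P: "partition_on {1..n} P" and i: "i \<in> {1..n}" "i \<notin> fst ` edges P"
  shows "\<exists>Q. partition_on {1..Suc n} Q \<and> edges Q = insert (i, Suc n) (edges P)"
proof -
  obtain B where B: "B \<in> P" "i \<in> B"
    using i(1) partition_onD1[OF P] by blast
  have "finite B"
    using B(1) partition_onD1[OF P] by (metis Union_upper finite_atLeastAtMost finite_subset)
  then have "\<forall>k\<in>B. k \<le> i"
    using edge_from_non_maximal[OF _ B] i(2) by (metis fst_conv image_eqI not_le)
  then have "edges (insert (insert (Suc n) B) (P - {B})) = insert (i, Suc n) (edges P)"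
    using edges_extend_block[OF B] i(1) by simp
  moreover have "partition_on {1..Suc n} (insert (insert (Suc n) B) (P - {B}))"
    using partition_on_extend_block[OF P B(1), of "Suc n"] by (simp add: atLeastAtMostSuc_conv)
  ultimately show ?thesis
    by blast
qed

lemma edges_onto_arc_systems:
  "A \<in> arc_systems {} 0 n \<Longrightarrow> \<exists>P. partition_on {1..n} P \<and> edges P = A"
proof (induction n arbitrary: A)
  case 0
  then have "A = {}"
    unfolding arc_systems_def by auto
  then show ?case
    by (intro exI[of _ "{}"]) (auto simp: edges_def partition_on_empty)
next
  case (Suc n)
  have arcs: "A \<subseteq> {(a, b). a < b \<and> 0 < a \<and> b \<le> Suc n}"
    and inj_fst: "inj_on fst A" and inj_snd: "inj_on snd A"
    using Suc.prems unfolding arc_systems_def by auto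
  define A' where "A' = {e \<in> A. snd e \<le> n}"
  have "A' \<in> arc_systems {} 0 n"
    using arcs inj_fst inj_snd unfolding A'_def arc_systems_def by (auto intro: inj_on_subset)
  then obtain P where P: "partition_on {1..n} P" and edges_P: "edges P = A'"
    using Suc.IH by blast
  show ?case
  proof (cases "\<exists>i. (i, Suc n) \<in> A")
    case False
    then have "edges (insert {Suc n} P) = A"
      using arcs edges_P unfolding A'_def by (auto simp: edges_insert block_edges_singleton le_Suc_eq)
    moreover have "partition_on {1..Suc n} (insert {Suc n} P)"
      using partition_on_insert_singleton[OF P, of "Suc n"] by (simp add: atLeastAtMostSuc_conv)
    ultimately show ?thesis
      by blast
  next
    case True
    then obtain i where i: "(i, Suc n) \<in> A"
      by blast
    have "e = (i, Suc n)" if "e \<in> A" "\<not> snd e \<le> n" for e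
      using that arcs inj_onD[OF inj_snd _ that(1) i] by (cases e) auto
    then have "A = insert (i, Suc n) (edges P)"
      using i unfolding edges_P A'_def by blast
    moreover have "i \<notin> fst ` edges P"
      using i inj_onD[OF inj_fst _ _ i] unfolding edges_P A'_def by force
    ultimately show ?thesis
      using extend_partition_by_arc[OF P] i arcs by auto
  qed
qed

section \<open>Counting arc diagrams by their open arcs\<close>

text \<open>Every crossing or nesting is counted once, from the arc that ends first.\<close>

definition overlaps :: "(nat \<times> nat) set \<Rightarrow> nat" where
  "overlaps A = card {(e, e'). e \<in> A \<and> e' \<in> A \<and> fst e \<noteq> fst e' \<and> fst e' < snd e \<and> snd e < snd e'}"

lemma cr_plus_ne_eq_overlaps:
  assumes "finite (edges P)"
  shows "cr P + ne P = overlaps (edges P)"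
proof -
  define X where "X = {((i1, j1), (i2, j2)). (i1, j1) \<in> edges P \<and> (i2, j2) \<in> edges P \<and> i1 < i2 \<and> i2 < j1 \<and> j1 < j2}"
  define Y where "Y = {((i1, j1), (i2, j2)). (i1, j1) \<in> edges P \<and> (i2, j2) \<in> edges P \<and> i1 < i2 \<and> i2 < j2 \<and> j2 < j1}"
  have fin: "finite X" "finite Y"
    by (rule finite_subset[of _ "edges P \<times> edges P"]; use assms in \<open>force simp: X_def Y_def\<close>)+
  have "{(e, e'). e \<in> edges P \<and> e' \<in> edges P \<and> fst e \<noteq> fst e' \<and> fst e' < snd e \<and> snd e < snd e'}
      = X \<union> prod.swap ` Y"
    unfolding X_def Y_def by (auto dest: edge_lt simp: image_iff)
  moreover have "X \<inter> prod.swap ` Y = {}"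
    unfolding X_def Y_def by auto
  ultimately have "overlaps (edges P) = card X + card Y"
    unfolding overlaps_def using fin by (simp add: card_Un_disjoint card_image)
  then show ?thesis
    unfolding cr_def ne_def X_def Y_def by simp
qed

lemma overlaps_insert:
  assumes "finite A" "\<forall>e\<in>A. t < snd e \<and> fst e \<noteq> s"
  shows "overlaps (insert (s, t) A) = overlaps A + card {e\<in>A. fst e < t}"
proof -
  let ?O = "\<lambda>A. {(e, e'). e \<in> A \<and> e' \<in> A \<and> fst e \<noteq> fst e' \<and> fst e' < snd e \<and> snd e < snd e'}"
  have "?O (insert (s, t) A) = ?O A \<union> Pair (s, t) ` {e\<in>A. fst e < t}"
    using assms(2) by fastforce
  moreover have "?O A \<inter> Pair (s, t) ` {e\<in>A. fst e < t} = {}"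
    using assms(2) by fastforce
  moreover have "finite (?O A)"
    by (rule finite_subset[of _ "A \<times> A"]) (use assms(1) in auto)
  moreover have "card (Pair (s, t) ` {e\<in>A. fst e < t}) = card {e\<in>A. fst e < t}"
    by (rule card_image) (simp add: inj_on_def)
  ultimately show ?thesis
    unfolding overlaps_def using assms(1) by (simp add: card_Un_disjoint)
qed

definition arc_weight :: "'a::comm_semiring_1 \<Rightarrow> 'a \<Rightarrow> (nat \<times> nat) set \<Rightarrow> 'a" where
  "arc_weight v q A = q ^ overlaps A * v ^ card A"

definition arc_gf :: "'a::comm_semiring_1 \<Rightarrow> 'a \<Rightarrow> nat set \<Rightarrow> nat \<Rightarrow> nat \<Rightarrow> 'a" where
  "arc_gf v q S t n = (\<Sum>A\<in>arc_systems S t n. arc_weight v q A)"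

lemma arc_systems_subset_Pow: "arc_systems S t n \<subseteq> Pow ({..t + n} \<times> {..t + n})"
  unfolding arc_systems_def by auto

lemma finite_arc_systems: "finite (arc_systems S t n)"
  using arc_systems_subset_Pow by (rule finite_subset) simp

lemma finite_arc_system: "A \<in> arc_systems S t n \<Longrightarrow> finite A"
  using arc_systems_subset_Pow by (meson PowD finite_SigmaI finite_atMost finite_subset subsetD)

lemma arc_systems_insert_disjoint:
  "Suc t \<notin> S \<Longrightarrow> arc_systems S (Suc t) n \<inter> arc_systems (insert (Suc t) S) (Suc t) n = {}"
  unfolding arc_systems_def by fastforce

lemma arc_systems_not_closing:
  assumes "S \<subseteq> {..t}"
  shows "{A \<in> arc_systems S t (Suc n). Suc t \<notin> snd ` A}
    = arc_systems S (Suc t) n \<union> arc_systems (insert (Suc t) S) (Suc t) n"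
proof (intro equalityI subsetI)
  fix A
  assume "A \<in> {A \<in> arc_systems S t (Suc n). Suc t \<notin> snd ` A}"
  then have A: "A \<in> arc_systems S t (Suc n)" "Suc t \<notin> snd ` A"
    by auto
  then have arcs: "A \<subseteq> {(a, b). a < b \<and> (a \<in> S \<or> a = Suc t \<or> Suc t < a) \<and> Suc t < b \<and> b \<le> Suc t + n}"
    unfolding arc_systems_def by (force simp: Suc_le_eq)
  show "A \<in> arc_systems S (Suc t) n \<union> arc_systems (insert (Suc t) S) (Suc t) n"
  proof (cases "Suc t \<in> fst ` A")
    case True
    then have "A \<in> arc_systems (insert (Suc t) S) (Suc t) n"
      using A arcs unfolding arc_systems_def by auto
    then show ?thesis ..
  next
    case False
    then have "A \<subseteq> {(a, b). a < b \<and> (a \<in> S \<or> Suc t < a) \<and> Suc t < b \<and> b \<le> Suc t + n}"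
      using arcs by force
    then have "A \<in> arc_systems S (Suc t) n"
      using A unfolding arc_systems_def by auto
    then show ?thesis ..
  qed
next
  fix A
  assume "A \<in> arc_systems S (Suc t) n \<union> arc_systems (insert (Suc t) S) (Suc t) n"
  then show "A \<in> {A \<in> arc_systems S t (Suc n). Suc t \<notin> snd ` A}"
    unfolding arc_systems_def by force
qed

lemma arc_systems_closing:
  assumes "S \<subseteq> {..t}" "s \<in> S"
  shows "{A \<in> arc_systems S t (Suc n). (s, Suc t) \<in> A}
    = insert (s, Suc t) ` {A \<in> arc_systems (S - {s}) t (Suc n). Suc t \<notin> snd ` A}"
proof (intro equalityI subsetI)
  fix A
  assume "A \<in> {A \<in> arc_systems S t (Suc n). (s, Suc t) \<in> A}"
  then have A: "A \<in> arc_systems S t (Suc n)" and arc: "(s, Suc t) \<in> A"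
    by auto
  have arcs: "A \<subseteq> {(a, b). a < b \<and> (a \<in> S \<or> t < a) \<and> t < b \<and> b \<le> t + Suc n}"
    and cover: "S \<subseteq> fst ` A" and inj: "inj_on fst A" "inj_on snd A"
    using A unfolding arc_systems_def by auto
  have other: "a \<noteq> s \<and> b \<noteq> Suc t" if "(a, b) \<in> A - {(s, Suc t)}" for a b
    using that arc inj by (metis DiffE singletonI fst_conv snd_conv inj_onD)
  have "A - {(s, Suc t)} \<subseteq> {(a, b). a < b \<and> (a \<in> S - {s} \<or> t < a) \<and> t < b \<and> b \<le> t + Suc n}"
    using arcs other by blast
  moreover have "S - {s} \<subseteq> fst ` (A - {(s, Suc t)})"
    using cover other by fastforce
  moreover have "Suc t \<notin> snd ` (A - {(s, Suc t)})"
    using other by fastforce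
  ultimately have "A - {(s, Suc t)} \<in> {A \<in> arc_systems (S - {s}) t (Suc n). Suc t \<notin> snd ` A}"
    using inj unfolding arc_systems_def by (simp add: inj_on_diff)
  then show "A \<in> insert (s, Suc t) ` {A \<in> arc_systems (S - {s}) t (Suc n). Suc t \<notin> snd ` A}"
    using arc by (intro rev_image_eqI) auto
next
  fix A
  assume "A \<in> insert (s, Suc t) ` {A \<in> arc_systems (S - {s}) t (Suc n). Suc t \<notin> snd ` A}"
  then obtain A' where A': "A' \<in> arc_systems (S - {s}) t (Suc n)" "Suc t \<notin> snd ` A'"
    and A: "A = insert (s, Suc t) A'"
    by auto
  have "s \<notin> fst ` A'"
    using A' assms unfolding arc_systems_def by force
  then show "A \<in> {A \<in> arc_systems S t (Suc n). (s, Suc t) \<in> A}"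
    using A' assms unfolding A arc_systems_def by auto
qed

lemma arc_systems_Suc:
  assumes "S \<subseteq> {..t}"
  shows "arc_systems S t (Suc n) = {A \<in> arc_systems S t (Suc n). Suc t \<notin> snd ` A}
    \<union> (\<Union>s\<in>S. {A \<in> arc_systems S t (Suc n). (s, Suc t) \<in> A})"
  using assms unfolding arc_systems_def by fastforce

text \<open>An arc closing at t + 1 crosses or nests exactly the other arcs open after t.\<close>

lemma arc_weight_insert_closing:
  assumes S: "S \<subseteq> {..t}" "s \<in> S" and A: "A \<in> arc_systems (S - {s}) t (Suc n)" "Suc t \<notin> snd ` A"
  shows "arc_weight v q (insert (s, Suc t) A) = v * q ^ (card S - 1) * arc_weight v q A"
proof -
  have arcs: "A \<subseteq> {(a, b). a < b \<and> (a \<in> S - {s} \<or> t < a) \<and> t < b \<and> b \<le> t + Suc n}"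
    and cover: "S - {s} \<subseteq> fst ` A" and inj: "inj_on fst A"
    using A(1) unfolding arc_systems_def by auto
  have fin: "finite A" "finite S"
    using finite_arc_system[OF A(1)] finite_subset[OF S(1)] by auto
  have later: "\<forall>e\<in>A. Suc t < snd e \<and> fst e \<noteq> s"
    using arcs A(2) S by force
  have "card {e\<in>A. fst e < Suc t} = card (fst ` {e\<in>A. fst e < Suc t})"
    by (rule card_image[symmetric]) (rule inj_on_subset[OF inj], auto)
  also have "fst ` {e\<in>A. fst e < Suc t} = S - {s}"
    using arcs cover S(1) by force
  finally have "overlaps (insert (s, Suc t) A) = overlaps A + (card S - 1)"
    using overlaps_insert[OF fin(1) later] fin(2) S(2) by simp
  moreover have "card (insert (s, Suc t) A) = Suc (card A)"
    using later fin(1) by (subst card_insert_disjoint) auto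
  ultimately show ?thesis
    unfolding arc_weight_def by (simp add: power_add algebra_simps)
qed

lemma sum_arc_weight_not_closing:
  assumes "S \<subseteq> {..t}"
  shows "(\<Sum>A | A \<in> arc_systems S t (Suc n) \<and> Suc t \<notin> snd ` A. arc_weight v q A)
    = arc_gf v q S (Suc t) n + arc_gf v q (insert (Suc t) S) (Suc t) n"
proof -
  have "Suc t \<notin> S"
    using assms by auto
  then show ?thesis
    unfolding arc_gf_def arc_systems_not_closing[OF assms]
    by (simp add: sum.union_disjoint finite_arc_systems arc_systems_insert_disjoint)
qed

lemma sum_arc_weight_closing:
  assumes "S \<subseteq> {..t}" "s \<in> S"
  shows "(\<Sum>A | A \<in> arc_systems S t (Suc n) \<and> (s, Suc t) \<in> A. arc_weight v q A)
    = v * q ^ (card S - 1) * (arc_gf v q (S - {s}) (Suc t) n + arc_gf v q (insert (Suc t) (S - {s})) (Suc t) n)"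
proof -
  let ?N = "{A \<in> arc_systems (S - {s}) t (Suc n). Suc t \<notin> snd ` A}"
  have "inj_on (insert (s, Suc t)) ?N"
    by (rule inj_onI) (metis (no_types, lifting) image_eqI insert_ident mem_Collect_eq snd_conv)
  then have "(\<Sum>A | A \<in> arc_systems S t (Suc n) \<and> (s, Suc t) \<in> A. arc_weight v q A)
      = (\<Sum>A\<in>?N. arc_weight v q (insert (s, Suc t) A))"
    using arc_systems_closing[OF assms, of n] by (simp add: sum.reindex)
  also have "\<dots> = (\<Sum>A\<in>?N. v * q ^ (card S - 1) * arc_weight v q A)"
    using arc_weight_insert_closing[OF assms] by (intro sum.cong) auto
  also have "\<dots> = v * q ^ (card S - 1) * (\<Sum>A\<in>?N. arc_weight v q A)"
    by (simp add: sum_distrib_left)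
  also have "(\<Sum>A\<in>?N. arc_weight v q A)
      = arc_gf v q (S - {s}) (Suc t) n + arc_gf v q (insert (Suc t) (S - {s})) (Suc t) n"
    using sum_arc_weight_not_closing[of "S - {s}" t] assms(1) by auto
  finally show ?thesis .
qed

lemma arc_gf_Suc:
  assumes "S \<subseteq> {..t}"
  shows "arc_gf v q S t (Suc n) = arc_gf v q S (Suc t) n + arc_gf v q (insert (Suc t) S) (Suc t) n
    + (\<Sum>s\<in>S. v * q ^ (card S - 1)
         * (arc_gf v q (S - {s}) (Suc t) n + arc_gf v q (insert (Suc t) (S - {s})) (Suc t) n))"
proof -
  let ?N = "{A \<in> arc_systems S t (Suc n). Suc t \<notin> snd ` A}"
  let ?C = "\<lambda>s. {A \<in> arc_systems S t (Suc n). (s, Suc t) \<in> A}"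
  have fin: "finite S" "finite ?N" "\<And>s. finite (?C s)"
    using finite_subset[OF assms] finite_arc_systems by auto
  have "?N \<inter> (\<Union>s\<in>S. ?C s) = {}"
    by force
  moreover have "?C s \<inter> ?C s' = {}" if "s \<noteq> s'" for s s'
    using that inj_onD[of snd _ "(s, Suc t)" "(s', Suc t)"] unfolding arc_systems_def by auto
  ultimately have "arc_gf v q S t (Suc n) = sum (arc_weight v q) ?N + (\<Sum>s\<in>S. sum (arc_weight v q) (?C s))"
    unfolding arc_gf_def using fin
    by (subst arc_systems_Suc[OF assms]) (simp add: sum.union_disjoint sum.UNION_disjoint)
  also have "(\<Sum>s\<in>S. sum (arc_weight v q) (?C s)) = (\<Sum>s\<in>S. v * q ^ (card S - 1)
         * (arc_gf v q (S - {s}) (Suc t) n + arc_gf v q (insert (Suc t) (S - {s})) (Suc t) n))"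
    using sum_arc_weight_closing[OF assms] by (intro sum.cong) auto
  also have "sum (arc_weight v q) ?N = arc_gf v q S (Suc t) n + arc_gf v q (insert (Suc t) S) (Suc t) n"
    by (rule sum_arc_weight_not_closing[OF assms])
  finally show ?thesis .
qed

lemma arc_gf_eq_motzkin_weight:
  fixes v q :: "'a::comm_semiring_1"
  assumes "S \<subseteq> {..t}"
  shows "arc_gf v q S t n
    = motzkin_weight (\<lambda>k. 1 + of_nat k * q ^ (k - 1) * v) (\<lambda>k. of_nat (k + 1) * q ^ k * v) n (card S)"
  using assms
proof (induction n arbitrary: S t)
  case 0
  have "arc_systems S t 0 = (if S = {} then {{}} else {})"
    unfolding arc_systems_def by force
  then show ?case
    using finite_subset[OF "0.prems"] by (simp add: arc_gf_def arc_weight_def overlaps_def)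
next
  case (Suc n)
  let ?W = "motzkin_weight (\<lambda>k. 1 + of_nat k * q ^ (k - 1) * v) (\<lambda>k. of_nat (k + 1) * q ^ k * v) n"
  have fin: "finite S" and "Suc t \<notin> S"
    using Suc.prems finite_subset by auto
  then have card_insert: "card (insert (Suc t) S) = Suc (card S)"
    by simp
  have card_remove: "card (insert (Suc t) (S - {s})) = card S \<and> card (S - {s}) = card S - 1" if "s \<in> S" for s
  proof -
    have "0 < card S"
      using fin that card_gt_0_iff by blast
    then show ?thesis
      using fin that \<open>Suc t \<notin> S\<close> by simp
  qed
  have "arc_gf v q S t (Suc n) = ?W (card S) + ?W (Suc (card S))
      + (\<Sum>s\<in>S. v * q ^ (card S - 1) * (?W (card S - 1) + ?W (card S)))"
  proof -
    have sub: "S \<subseteq> {..Suc t}" "insert (Suc t) S \<subseteq> {..Suc t}"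
      "S - {s} \<subseteq> {..Suc t}" "insert (Suc t) (S - {s}) \<subseteq> {..Suc t}" for s
      using Suc.prems by auto
    show ?thesis
      unfolding arc_gf_Suc[OF Suc.prems] Suc.IH[OF sub(1)] Suc.IH[OF sub(2)] Suc.IH[OF sub(3)]
        Suc.IH[OF sub(4)] card_insert
      using card_remove by (intro arg_cong2[where f = "(+)"] sum.cong) auto
  qed
  also have "\<dots> = ?W (card S) + ?W (Suc (card S))
      + of_nat (card S) * (v * q ^ (card S - 1) * (?W (card S - 1) + ?W (card S)))"
    by simp
  also have "\<dots> = motzkin_weight (\<lambda>k. 1 + of_nat k * q ^ (k - 1) * v) (\<lambda>k. of_nat (k + 1) * q ^ k * v) (Suc n) (card S)"
    by (cases "card S") (simp_all add: algebra_simps)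
  finally show ?case .
qed

lemma bij_betw_edges_arc_systems: "bij_betw edges (set_partitions n) (arc_systems {} 0 n)"
proof -
  have "edges ` set_partitions n = arc_systems {} 0 n"
    using edges_in_arc_systems edges_onto_arc_systems unfolding set_partitions_def by blast
  then show ?thesis
    unfolding bij_betw_def set_partitions_def using inj_on_edges[of "{1..n}"] by simp
qed

lemma E_eq_arc_gf: "E n v q = arc_gf v q {} 0 n"
proof -
  have "cr P + ne P = overlaps (edges P)" if "P \<in> set_partitions n" for P
    using that finite_arc_system[OF edges_in_arc_systems] cr_plus_ne_eq_overlaps
    unfolding set_partitions_def by blast
  then have "E n v q = (\<Sum>P\<in>set_partitions n. arc_weight v q (edges P))"
    unfolding E_def arc_weight_def ed_def by simp
  also have "\<dots> = arc_gf v q {} 0 n"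
    unfolding arc_gf_def using bij_betw_edges_arc_systems by (rule sum.reindex_bij_betw)
  finally show ?thesis .
qed

theorem corollary3p6:
  fixes v q :: "'a::field"
  shows "(\<lambda>m. jcf (\<lambda>k. 1 + of_nat k * q ^ (k - 1) * v)
                  (\<lambda>k. of_nat (k + 1) * q ^ k * v) m 0)
           \<longlonglongrightarrow> Abs_fps (\<lambda>n. E n v q)"
proof -
  have "E n v q = motzkin_weight (\<lambda>k. 1 + of_nat k * q ^ (k - 1) * v) (\<lambda>k. of_nat (k + 1) * q ^ k * v) n 0" for n
    using E_eq_arc_gf[of n v q] arc_gf_eq_motzkin_weight[of "{}" 0 v q n] by simp
  then show ?thesis
    using jcf_tendsto_motzkin_weight by simp
qed

end
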